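(* Let $1\le k\le n$ and $p=c_n^k$. Suppose $X$ is a real symmetric $n\times n$ matrix given together with a diagonalization $X=Q\Lambda Q^{\intercal}$ ($Q$ orthogonal, $\Lambda$ diagonal). Then there is an algorithm that computes the vector $v\in\mathbb{R}^n$ with $v_i=p|_{\{i\}}(X)$ for all $i\in[n]$ using $O(n^{\omega})$ floating point operations.
   Context: $c_n^k(X)=\sum_{S\subseteq[n],|S|=k}\det(X|_S)$ with $X|_S$ the principal submatrix indexed by $S$; $p|_{\{i\}}(X)=\sum_{|S|=k,\,i\in S}\det(X|_S)$. $\omega$ is the matrix multiplication exponent. *)

theory Defs
  imports Complex_Main "HOL-Combinatorics.Permutations"
begin

text \<open>Matrices of varying size n are functions nat => nat => real, indices 0..n-1.
  The determinant of the principal submatrix X|_S is written out by the Leibniz formula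
  (which is what the library determinant unfolds to).\<close>

definition principal_minor :: "(nat \<Rightarrow> nat \<Rightarrow> real) \<Rightarrow> nat set \<Rightarrow> real" where
  "principal_minor X S = (\<Sum>\<pi> | \<pi> permutes S. of_int (sign \<pi>) * (\<Prod>i\<in>S. X i (\<pi> i)))"

definition elem_sym_minor :: "nat \<Rightarrow> nat \<Rightarrow> (nat \<Rightarrow> nat \<Rightarrow> real) \<Rightarrow> real" where
  "elem_sym_minor n k X = (\<Sum>S | S \<subseteq> {0..<n} \<and> card S = k. principal_minor X S)"

definition restrict_minor_sum :: "nat \<Rightarrow> nat \<Rightarrow> nat \<Rightarrow> (nat \<Rightarrow> nat \<Rightarrow> real) \<Rightarrow> real" where
  "restrict_minor_sum n k i X = (\<Sum>S | S \<subseteq> {0..<n} \<and> card S = k \<and> i \<in> S. principal_minor X S)"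

datatype instr = Const real | Add nat nat | Sub nat nat | Mul nat nat | Div nat nat

definition reg :: "real list \<Rightarrow> nat \<Rightarrow> real" where
  "reg rs a = (if a < length rs then rs ! a else 0)"

fun step :: "real list \<Rightarrow> instr \<Rightarrow> real" where
  "step rs (Const c) = c"
| "step rs (Add a b) = reg rs a + reg rs b"
| "step rs (Sub a b) = reg rs a - reg rs b"
| "step rs (Mul a b) = reg rs a * reg rs b"
| "step rs (Div a b) = reg rs a / reg rs b"

fun exec :: "real list \<Rightarrow> instr list \<Rightarrow> real list" where
  "exec rs [] = rs"
| "exec rs (ins # P) = exec (rs @ [step rs ins]) P"

text \<open>Program P with output registers outs computes F on all inputs satisfying D
  (inputs are lists of length m). The cost is the number of instructions, length P.\<close>
definition slp_computes ::
  "nat \<Rightarrow> (real list \<Rightarrow> bool) \<Rightarrow> (real list \<Rightarrow> real list) \<Rightarrow> instr list \<Rightarrow> nat list \<Rightarrow> bool" where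
  "slp_computes m D F P outs \<longleftrightarrow>
     (\<forall>x. length x = m \<longrightarrow> D x \<longrightarrow> map (reg (exec x P)) outs = F x)"

text \<open>Input encoding for the n x n product: A in row-major order, then B; output is AB row-major.\<close>
definition matmul_spec :: "nat \<Rightarrow> real list \<Rightarrow> real list" where
  "matmul_spec n x = map (\<lambda>r. \<Sum>l<n. x ! ((r div n) * n + l) * x ! (n * n + l * n + r mod n)) [0..<n*n]"

definition mm_exponent :: "real \<Rightarrow> bool" where
  "mm_exponent \<tau> \<longleftrightarrow> (\<exists>C. \<forall>n\<ge>1. \<exists>P outs.
      slp_computes (2 * n * n) (\<lambda>_. True) (matmul_spec n) P outs \<and> real (length P) \<le> C * real n powr \<tau>)"

definition omega :: real where
  "omega = Inf {\<tau>. mm_exponent \<tau>}"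

text \<open>Input list: X in row-major order (n^2 entries), then Q in row-major order (n^2 entries),
  then the diagonal of Lambda (n entries).\<close>
definition inX :: "nat \<Rightarrow> real list \<Rightarrow> nat \<Rightarrow> nat \<Rightarrow> real" where
  "inX n x i j = x ! (i * n + j)"
definition inQ :: "nat \<Rightarrow> real list \<Rightarrow> nat \<Rightarrow> nat \<Rightarrow> real" where
  "inQ n x i j = x ! (n * n + i * n + j)"
definition inL :: "nat \<Rightarrow> real list \<Rightarrow> nat \<Rightarrow> real" where
  "inL n x j = x ! (2 * n * n + j)"

text \<open>Valid input: Q orthogonal (Q Q^T = I) and X = Q Lambda Q^T (hence X real symmetric).\<close>
definition valid_input :: "nat \<Rightarrow> real list \<Rightarrow> bool" where
  "valid_input n x \<longleftrightarrow>
     (\<forall>i<n. \<forall>j<n. (\<Sum>l<n. inQ n x i l * inQ n x j l) = (if i = j then 1 else 0)) \<and>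
     (\<forall>i<n. \<forall>j<n. inX n x i j = (\<Sum>l<n. inQ n x i l * inL n x l * inQ n x j l))"

definition minor_vector :: "nat \<Rightarrow> nat \<Rightarrow> real list \<Rightarrow> real list" where
  "minor_vector n k x = map (\<lambda>i. restrict_minor_sum n k i (inX n x)) [0..<n]"

end

(*
  Let u be the i-th row of Q.  Expanding det (X + t (I - e_i e_i^T)) along the diagonal gives
  the generating polynomial  sum over S containing i of det (X|_S) t^(n - |S|),  so p|_{i}(X) is
  its coefficient of t^(n - k).  In the eigenbasis the same matrix is  Lambda + t I - t u u^T,
  whose determinant the matrix determinant lemma and  sum_j u_j^2 = 1  turn into
  sum_j u_j^2 lambda_j prod_{l /= j} (t + lambda_l).  Hence
    p|_{i}(X) = sum_j Q_ij^2 w_j,   w_j = lambda_j e_{k-1}(lambda_l : l /= j).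
  The coefficients of prod_l (t + lambda_l) cost O(n^2) operations, each w_j then k steps of
  synthetic division by t + lambda_j, and v = (entrywise square of Q) w another O(n^2).
  Finally O(n^2) is O(n^tau) for every matrix multiplication exponent tau, because a program
  multiplying n x n matrices must write its n^2 outputs into fresh registers.
*)
theory Submission
  imports Defs "Jordan_Normal_Form.Determinant" "HOL-Computational_Algebra.Polynomial"
begin

lemma principal_minor_cong:
  assumes "\<And>a b. a \<in> S \<Longrightarrow> b \<in> S \<Longrightarrow> M a b = M' a b"
  shows "principal_minor M S = principal_minor M' S"
  unfolding principal_minor_def
proof (intro sum.cong refl arg_cong2[where f = "(*)"] prod.cong)
  fix p a assume "p \<in> {p. p permutes S}" "a \<in> S"
  then show "M a (p a) = M' a (p a)" using assms permutes_in_image by fastforce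
qed

lemma principal_minor_eq_det: "principal_minor M {0..<n} = det (mat n n (\<lambda>(a, b). M a b))"
proof -
  have "det (mat n n (\<lambda>(a, b). M a b)) =
      (\<Sum>p \<in> {p. p permutes {0..<n}}. of_int (sign p) * (\<Prod>a = 0..<n. mat n n (\<lambda>(a, b). M a b) $$ (a, p a)))"
    by (rule det_def') simp
  also have "\<dots> = principal_minor M {0..<n}"
    unfolding principal_minor_def
  proof (intro sum.cong refl arg_cong2[where f = "(*)"] prod.cong)
    fix p a assume "p \<in> {p. p permutes {0..<n}}" "a \<in> {0..<n}"
    then show "mat n n (\<lambda>(a, b). M a b) $$ (a, p a) = M a (p a)"
      using permutes_in_image by fastforce
  qed
  finally show ?thesis by simp
qed

lemma principal_minor_mult:
  "principal_minor (\<lambda>a b. \<Sum>l<n. A a l * B l b) {0..<n} =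
   principal_minor A {0..<n} * principal_minor B {0..<n}"
proof -
  have "mat n n (\<lambda>(a, b). \<Sum>l<n. A a l * B l b) = mat n n (\<lambda>(a, b). A a b) * mat n n (\<lambda>(a, b). B a b)"
    by (rule eq_matI) (auto simp: scalar_prod_def atLeast0LessThan intro!: sum.cong)
  then show ?thesis unfolding principal_minor_eq_det by (simp add: det_mult[of _ n])
qed

lemma principal_minor_transpose: "principal_minor (\<lambda>a b. A b a) {0..<n} = principal_minor A {0..<n}"
proof -
  have "mat n n (\<lambda>(a, b). A b a) = transpose_mat (mat n n (\<lambda>(a, b). A a b))"
    by (rule eq_matI) auto
  then show ?thesis unfolding principal_minor_eq_det by (simp add: det_transpose[of _ n])
qed

lemma principal_minor_one: "principal_minor (\<lambda>a b. if a = b then 1 else 0) {0..<n} = 1"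
proof -
  have "mat n n (\<lambda>(a, b). if a = b then 1 else (0::real)) = 1\<^sub>m n"
    by (rule eq_matI) auto
  then show ?thesis unfolding principal_minor_eq_det by simp
qed

lemma principal_minor_orthogonal_conj:
  assumes orth: "\<forall>a<n. \<forall>b<n. (\<Sum>l<n. Q a l * Q b l) = (if a = b then 1 else 0)"
  shows "principal_minor (\<lambda>a b. \<Sum>l<n. Q a l * (\<Sum>m<n. B l m * Q b m)) {0..<n} = principal_minor B {0..<n}"
proof -
  have "principal_minor Q {0..<n} * principal_minor Q {0..<n} =
        principal_minor (\<lambda>a b. \<Sum>l<n. Q a l * Q b l) {0..<n}"
    using principal_minor_mult[where n = n and A = Q and B = "\<lambda>l b. Q b l"]
      principal_minor_transpose[where A = Q and n = n] by simp
  also have "\<dots> = 1"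
    using principal_minor_cong[of "{0..<n}" "\<lambda>a b. \<Sum>l<n. Q a l * Q b l" "\<lambda>a b. if a = b then 1 else 0"]
      orth principal_minor_one by simp
  finally have "principal_minor Q {0..<n} * principal_minor Q {0..<n} = 1" .
  then show ?thesis
    using principal_minor_mult[where n = n and A = Q and B = "\<lambda>l b. \<Sum>m<n. B l m * Q b m"]
      principal_minor_mult[where n = n and A = B and B = "\<lambda>m b. Q b m"]
      principal_minor_transpose[where A = Q and n = n]
    by (simp add: algebra_simps)
qed

lemma permutes_fixing_complement_iff:
  assumes "S \<subseteq> A"
  shows "p permutes A \<and> (\<forall>a\<in>A - S. p a = a) \<longleftrightarrow> p permutes S"
proof
  assume p: "p permutes A \<and> (\<forall>a\<in>A - S. p a = a)"
  then have "p a = a" if "a \<notin> S" for a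
    using that permutes_not_in[of p A a] by (cases "a \<in> A") auto
  then show "p permutes S"
    using p unfolding permutes_def by blast
next
  assume "p permutes S"
  then show "p permutes A \<and> (\<forall>a\<in>A - S. p a = a)"
    using assms permutes_subset[of p S A] permutes_not_in[of p S] by simp
qed

text \<open>Only the permutations of \<open>A\<close> that fix \<open>A - S\<close> pointwise survive the diagonal factor.\<close>
lemma sum_permutes_diag_factor:
  assumes "finite A" "S \<subseteq> A"
  shows "(\<Sum>p | p permutes A. of_int (sign p) *
            ((\<Prod>a\<in>S. M a (p a)) * (\<Prod>a\<in>A - S. if a = p a then d a else 0))) =
         prod d (A - S) * principal_minor M S"
proof -
  have diag: "(\<Prod>a\<in>A - S. if a = p a then d a else 0) =
      (if \<forall>a\<in>A - S. p a = a then prod d (A - S) else 0)" for p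
  proof (cases "\<forall>a\<in>A - S. p a = a")
    case False
    then obtain a where "a \<in> A - S" "p a \<noteq> a" by blast
    then have "(\<Prod>a\<in>A - S. if a = p a then d a else 0) = 0"
      using assms(1) by (intro prod_zero) (auto intro!: bexI[of _ a])
    then show ?thesis using False by auto
  qed (auto intro: prod.cong)
  have "(\<Sum>p | p permutes A. of_int (sign p) *
            ((\<Prod>a\<in>S. M a (p a)) * (\<Prod>a\<in>A - S. if a = p a then d a else 0))) =
        (\<Sum>p \<in> {p. p permutes A}. if \<forall>a\<in>A - S. p a = a
            then prod d (A - S) * (of_int (sign p) * (\<Prod>a\<in>S. M a (p a))) else 0)"
    by (intro sum.cong refl) (simp add: diag)
  also have "\<dots> = (\<Sum>p \<in> {p \<in> {p. p permutes A}. \<forall>a\<in>A - S. p a = a}.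
                     prod d (A - S) * (of_int (sign p) * (\<Prod>a\<in>S. M a (p a))))"
    by (rule sum.inter_filter[symmetric]) (simp add: finite_permutations assms(1))
  also have "{p \<in> {p. p permutes A}. \<forall>a\<in>A - S. p a = a} = {p. p permutes S}"
    using permutes_fixing_complement_iff[OF assms(2)] by auto
  finally show ?thesis
    unfolding principal_minor_def sum_distrib_left by (simp only: mult.assoc)
qed

lemma principal_minor_diag_add:
  assumes "finite A"
  shows "principal_minor (\<lambda>a b. (if a = b then d a else 0) + M a b) A =
         (\<Sum>S\<in>Pow A. prod d (A - S) * principal_minor M S)"
proof -
  have "(\<Prod>a\<in>A. (if a = p a then d a else 0) + M a (p a)) =
        (\<Sum>S\<in>Pow A. (\<Prod>a\<in>S. M a (p a)) * (\<Prod>a\<in>A - S. if a = p a then d a else 0))" for p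
    using prod_add[OF assms, of "\<lambda>a. M a (p a)" "\<lambda>a. if a = p a then d a else 0"]
    by (simp add: add.commute)
  then have "principal_minor (\<lambda>a b. (if a = b then d a else 0) + M a b) A =
      (\<Sum>p | p permutes A. \<Sum>S\<in>Pow A. of_int (sign p) *
         ((\<Prod>a\<in>S. M a (p a)) * (\<Prod>a\<in>A - S. if a = p a then d a else 0)))"
    unfolding principal_minor_def by (simp add: sum_distrib_left)
  also have "\<dots> = (\<Sum>S\<in>Pow A. prod d (A - S) * principal_minor M S)"
    by (subst sum.swap) (use assms in \<open>simp add: sum_permutes_diag_factor\<close>)
  finally show ?thesis .
qed

lemma sum_sign_permutes_eq_0:
  assumes "2 \<le> card S"
  shows "(\<Sum>p | p permutes S. (of_int (sign p) :: real)) = 0"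
proof -
  obtain a b where ab: "a \<in> S" "b \<in> S" "a \<noteq> b"
    using assms by (force simp: numeral_2_eq_2 card_le_Suc_iff)
  have fin: "finite S" using assms card.infinite by force
  let ?t = "Transposition.transpose a b"
  have t: "?t permutes S" using ab(1,2) by (rule permutes_swap_id)
  have "(\<Sum>p | p permutes S. (of_int (sign p) :: real)) = (\<Sum>p | p permutes S. - of_int (sign p))"
  proof (rule sum.reindex_bij_witness[where i = "\<lambda>p. ?t \<circ> p" and j = "\<lambda>p. ?t \<circ> p"])
    fix p assume "p \<in> {p. p permutes S}"
    then have p: "p permutes S" by simp
    show "?t \<circ> (?t \<circ> p) = p" by (simp add: comp_assoc[symmetric] transpose_comp_involutory)
    show "?t \<circ> p \<in> {p. p permutes S}" using permutes_compose[OF p t] by simp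
    have "sign (?t \<circ> p) = sign ?t * sign p"
      using p t fin permutation_permutes by (blast intro: sign_compose)
    then show "- of_int (sign (?t \<circ> p)) = (of_int (sign p) :: real)"
      using ab by (simp add: sign_swap_id)
  next
    fix p assume "p \<in> {p. p permutes S}"
    then have p: "p permutes S" by simp
    show "?t \<circ> (?t \<circ> p) = p" by (simp add: comp_assoc[symmetric] transpose_comp_involutory)
    show "?t \<circ> p \<in> {p. p permutes S}" using permutes_compose[OF p t] by simp
  qed
  then show ?thesis by (simp add: sum_negf)
qed

lemma principal_minor_rank_one:
  assumes "2 \<le> card S"
  shows "principal_minor (\<lambda>a b. u a * w b) S = 0"
proof -
  have "principal_minor (\<lambda>a b. u a * w b) S = (\<Sum>p | p permutes S. of_int (sign p)) * (prod u S * prod w S)"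
    unfolding principal_minor_def sum_distrib_right
  proof (intro sum.cong refl)
    fix p assume "p \<in> {p. p permutes S}"
    then have "(\<Prod>a\<in>S. w (p a)) = prod w S"
      using prod.permute[of p S w] by (simp add: o_def)
    then show "of_int (sign p) * (\<Prod>a\<in>S. u a * w (p a)) = of_int (sign p) * (prod u S * prod w S)"
      by (simp add: prod.distrib)
  qed
  then show ?thesis using sum_sign_permutes_eq_0[OF assms] by simp
qed

lemma principal_minor_diag_add_rank_one:
  assumes "finite A"
  shows "principal_minor (\<lambda>a b. (if a = b then d a else 0) + u a * w b) A =
         prod d A + (\<Sum>j\<in>A. prod d (A - {j}) * (u j * w j))"
proof -
  let ?f = "\<lambda>S. prod d (A - S) * principal_minor (\<lambda>a b. u a * w b) S"
  have "(\<Sum>S\<in>Pow A. ?f S) = (\<Sum>S\<in>insert {} ((\<lambda>j. {j}) ` A). ?f S)"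
  proof (rule sum.mono_neutral_right)
    show "\<forall>S\<in>Pow A - insert {} ((\<lambda>j. {j}) ` A). ?f S = 0"
    proof
      fix S assume S: "S \<in> Pow A - insert {} ((\<lambda>j. {j}) ` A)"
      then have "finite S" using assms finite_subset by auto
      moreover have "card S \<noteq> 0" "card S \<noteq> 1" using S \<open>finite S\<close> by (auto simp: card_1_singleton_iff)
      ultimately have "2 \<le> card S" by linarith
      then show "?f S = 0" using principal_minor_rank_one[of S] by simp
    qed
  qed (use assms in auto)
  also have "\<dots> = ?f {} + (\<Sum>j\<in>A. ?f {j})"
    using assms by (subst sum.insert) (auto simp: sum.reindex inj_on_def)
  finally show ?thesis
    unfolding principal_minor_diag_add[OF assms] by (simp add: principal_minor_def)
qed

section \<open>The spectral formula for p|_{i}\<close>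

text \<open>The coefficient of \<open>t\<^sup>m\<close> is the elementary symmetric polynomial \<open>e\<^bsub>|A| - m\<^esub>\<close>
  of the \<open>lam a\<close>, \<open>a \<in> A\<close>.\<close>
definition linear_factors :: "(nat \<Rightarrow> real) \<Rightarrow> nat set \<Rightarrow> real poly" where
  "linear_factors lam A = (\<Prod>a\<in>A. [:lam a, 1:])"

lemma poly_linear_factors: "poly (linear_factors lam A) t = (\<Prod>a\<in>A. t + lam a)"
  by (simp add: linear_factors_def poly_prod add.commute)

lemma degree_linear_factors: "finite A \<Longrightarrow> degree (linear_factors lam A) = card A"
  unfolding linear_factors_def by (subst degree_prod_eq_sum_degree) auto

lemma linear_factors_lessThan_Suc:
  "linear_factors lam {..<Suc l} = [:lam l, 1:] * linear_factors lam {..<l}"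
  by (simp add: linear_factors_def)

lemma linear_factors_remove:
  "finite A \<Longrightarrow> j \<in> A \<Longrightarrow> linear_factors lam A = [:lam j, 1:] * linear_factors lam (A - {j})"
  unfolding linear_factors_def by (rule prod.remove)

lemma coeff_linear_factors_deflate:
  assumes "j < n" "s < n"
  shows "coeff (linear_factors lam ({..<n} - {j})) (n - Suc s) =
         coeff (linear_factors lam {..<n}) (n - s) - lam j * coeff (linear_factors lam ({..<n} - {j})) (n - s)"
  using assms by (simp add: linear_factors_remove[of "{..<n}" j] coeff_pCons' Suc_diff_Suc)

lemma coeff_linear_factors_deflate_top:
  "j < n \<Longrightarrow> coeff (linear_factors lam ({..<n} - {j})) n = 0"
  by (rule coeff_eq_0) (simp add: degree_linear_factors)

lemma principal_minor_add_diag_except: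
  assumes "finite A" "i \<in> A"
  shows "principal_minor (\<lambda>a b. (if a = b \<and> a \<noteq> i then t else 0) + X a b) A =
         (\<Sum>S | S \<subseteq> A \<and> i \<in> S. principal_minor X S * t ^ card (A - S))"
proof -
  define d where "d a = (if a = i then 0 else t)" for a
  have "(\<lambda>a b. (if a = b \<and> a \<noteq> i then t else 0) + X a b) = (\<lambda>a b. (if a = b then d a else 0) + X a b)"
    by (auto simp: fun_eq_iff d_def)
  then have "principal_minor (\<lambda>a b. (if a = b \<and> a \<noteq> i then t else 0) + X a b) A =
      (\<Sum>S\<in>Pow A. prod d (A - S) * principal_minor X S)"
    by (simp add: principal_minor_diag_add[OF assms(1)])
  also have "\<dots> = (\<Sum>S | S \<subseteq> A \<and> i \<in> S. prod d (A - S) * principal_minor X S)"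
  proof (rule sum.mono_neutral_right)
    show "\<forall>S\<in>Pow A - {S. S \<subseteq> A \<and> i \<in> S}. prod d (A - S) * principal_minor X S = 0"
      using assms by (auto simp: d_def intro!: prod_zero bexI[of _ i])
  qed (use assms in auto)
  also have "\<dots> = (\<Sum>S | S \<subseteq> A \<and> i \<in> S. principal_minor X S * t ^ card (A - S))"
  proof (intro sum.cong refl)
    fix S assume "S \<in> {S. S \<subseteq> A \<and> i \<in> S}"
    then have "prod d (A - S) = (\<Prod>a\<in>A - S. t)" by (intro prod.cong) (auto simp: d_def)
    then show "prod d (A - S) * principal_minor X S = principal_minor X S * t ^ card (A - S)" by simp
  qed
  finally show ?thesis .
qed

text \<open>In the eigenbasis, \<open>X + t (I - e\<^sub>i e\<^sub>i\<^sup>T)\<close> becomes \<open>\<Lambda> + t I - t u u\<^sup>T\<close>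
  with \<open>u\<close> the \<open>i\<close>-th row of \<open>Q\<close>.\<close>
lemma add_diag_except_eq_conj:
  fixes Q X :: "nat \<Rightarrow> nat \<Rightarrow> 'a::comm_ring_1"
  assumes orth: "\<forall>a<n. \<forall>b<n. (\<Sum>l<n. Q a l * Q b l) = (if a = b then 1 else 0)"
    and X: "\<forall>a<n. \<forall>b<n. X a b = (\<Sum>l<n. Q a l * lam l * Q b l)"
    and "i < n" "a < n" "b < n"
  shows "(if a = b \<and> a \<noteq> i then t else 0) + X a b =
    (\<Sum>l<n. Q a l * (\<Sum>m<n. ((if l = m then t + lam l else 0) + - t * Q i l * Q i m) * Q b m))"
proof -
  define c where "c = (if i = b then 1 else 0 :: 'a)"
  have inner: "(\<Sum>m<n. ((if l = m then t + lam l else 0) + - t * Q i l * Q i m) * Q b m) =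
      (t + lam l) * Q b l - t * Q i l * c" if "l < n" for l
  proof -
    have "(\<Sum>m<n. ((if l = m then t + lam l else 0) + - t * Q i l * Q i m) * Q b m) =
        (\<Sum>m<n. (if l = m then t + lam l else 0) * Q b m) + (\<Sum>m<n. - t * Q i l * (Q i m * Q b m))"
      unfolding distrib_right sum.distrib by (simp add: mult.assoc)
    also have "(\<Sum>m<n. (if l = m then t + lam l else 0) * Q b m) = (t + lam l) * Q b l"
      using that by (simp add: if_distrib[of "\<lambda>x. x * _"] cong: if_cong)
    also have "(\<Sum>m<n. - t * Q i l * (Q i m * Q b m)) = - t * Q i l * (\<Sum>m<n. Q i m * Q b m)"
      by (simp add: sum_distrib_left)
    also have "(\<Sum>m<n. Q i m * Q b m) = c"
      using orth assms(3,5) by (simp add: c_def)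
    finally show ?thesis by simp
  qed
  have "(\<Sum>l<n. Q a l * (\<Sum>m<n. ((if l = m then t + lam l else 0) + - t * Q i l * Q i m) * Q b m)) =
      (\<Sum>l<n. t * (Q a l * Q b l) + Q a l * lam l * Q b l - t * c * (Q a l * Q i l))"
  proof (intro sum.cong refl)
    fix l assume "l \<in> {..<n}"
    then have "Q a l * (\<Sum>m<n. ((if l = m then t + lam l else 0) + - t * Q i l * Q i m) * Q b m) =
        Q a l * ((t + lam l) * Q b l - t * Q i l * c)"
      by (simp only: inner lessThan_iff)
    also have "\<dots> = t * (Q a l * Q b l) + Q a l * lam l * Q b l - t * c * (Q a l * Q i l)"
      by (simp add: algebra_simps)
    finally show "Q a l * (\<Sum>m<n. ((if l = m then t + lam l else 0) + - t * Q i l * Q i m) * Q b m) =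
        t * (Q a l * Q b l) + Q a l * lam l * Q b l - t * c * (Q a l * Q i l)" .
  qed
  also have "\<dots> = t * (\<Sum>l<n. Q a l * Q b l) + (\<Sum>l<n. Q a l * lam l * Q b l)
      - t * c * (\<Sum>l<n. Q a l * Q i l)"
    by (simp add: sum.distrib sum_subtractf sum_distrib_left)
  also have "\<dots> = t * (if a = b then 1 else 0) + X a b - t * c * (if a = i then 1 else 0)"
    using orth X assms(3-5) by simp
  finally show ?thesis
    by (auto simp: c_def)
qed

lemma principal_minor_add_diag_except_spectral:
  assumes orth: "\<forall>a<n. \<forall>b<n. (\<Sum>l<n. Q a l * Q b l) = (if a = b then 1 else 0)"
    and X: "\<forall>a<n. \<forall>b<n. X a b = (\<Sum>l<n. Q a l * lam l * Q b l)"
    and i: "i < n"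
  shows "principal_minor (\<lambda>a b. (if a = b \<and> a \<noteq> i then t else 0) + X a b) {0..<n} =
         (\<Sum>j<n. Q i j * Q i j * lam j * (\<Prod>l\<in>{..<n} - {j}. t + lam l))"
proof -
  define B where "B l m = (if l = m then t + lam l else 0) + - t * Q i l * Q i m" for l m
  define P where "P j = (\<Prod>l\<in>{..<n} - {j}. t + lam l)" for j
  have "principal_minor (\<lambda>a b. (if a = b \<and> a \<noteq> i then t else 0) + X a b) {0..<n} =
        principal_minor (\<lambda>a b. \<Sum>l<n. Q a l * (\<Sum>m<n. B l m * Q b m)) {0..<n}"
    unfolding B_def by (rule principal_minor_cong) (simp add: add_diag_except_eq_conj[OF orth X i])
  also have "\<dots> = principal_minor B {0..<n}"
    by (rule principal_minor_orthogonal_conj[OF orth])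
  also have "\<dots> = (\<Prod>l<n. t + lam l) + (\<Sum>j<n. P j * (- t * Q i j * Q i j))"
    unfolding B_def P_def principal_minor_diag_add_rank_one[OF finite_atLeastLessThan]
    by (simp add: atLeast0LessThan mult.assoc)
  also have "(\<Prod>l<n. t + lam l) = (\<Sum>j<n. Q i j * Q i j * ((t + lam j) * P j))"
  proof -
    have "(\<Sum>j<n. Q i j * Q i j) = 1" using orth i by auto
    then have "(\<Prod>l<n. t + lam l) = (\<Sum>j<n. Q i j * Q i j * (\<Prod>l<n. t + lam l))"
      by (simp add: sum_distrib_right[symmetric])
    also have "\<dots> = (\<Sum>j<n. Q i j * Q i j * ((t + lam j) * P j))"
      unfolding P_def by (intro sum.cong refl) (simp add: prod.remove[of "{..<n}"])
    finally show ?thesis .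
  qed
  also have "(\<Sum>j<n. Q i j * Q i j * ((t + lam j) * P j)) + (\<Sum>j<n. P j * (- t * Q i j * Q i j)) =
      (\<Sum>j<n. Q i j * Q i j * ((t + lam j) * P j) + P j * (- t * Q i j * Q i j))"
    by (rule sum.distrib[symmetric])
  also have "\<dots> = (\<Sum>j<n. Q i j * Q i j * lam j * P j)"
    by (intro sum.cong refl) (simp add: algebra_simps)
  finally show ?thesis
    unfolding P_def .
qed

lemma restrict_minor_sum_spectral:
  assumes orth: "\<forall>a<n. \<forall>b<n. (\<Sum>l<n. Q a l * Q b l) = (if a = b then 1 else 0)"
    and X: "\<forall>a<n. \<forall>b<n. X a b = (\<Sum>l<n. Q a l * lam l * Q b l)"
    and i: "i < n" and k: "k \<le> n"
  shows "restrict_minor_sum n k i X =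
         (\<Sum>j<n. Q i j * Q i j * lam j * coeff (linear_factors lam ({..<n} - {j})) (n - k))"
proof -
  define LP where "LP = (\<Sum>S | S \<subseteq> {0..<n} \<and> i \<in> S. monom (principal_minor X S) (n - card S))"
  define RP where "RP = (\<Sum>j<n. smult (Q i j * Q i j * lam j) (linear_factors lam ({..<n} - {j})))"
  have "poly LP t = poly RP t" for t
  proof -
    have "poly LP t = (\<Sum>S | S \<subseteq> {0..<n} \<and> i \<in> S. principal_minor X S * t ^ card ({0..<n} - S))"
      unfolding LP_def poly_sum poly_monom by (intro sum.cong refl) (auto simp: card_Diff_subset finite_subset)
    also have "\<dots> = poly RP t"
      using principal_minor_add_diag_except[of "{0..<n}" i t X]
        principal_minor_add_diag_except_spectral[OF orth X i, of t] i
      by (simp add: RP_def poly_sum poly_linear_factors)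
    finally show ?thesis .
  qed
  then have "poly LP = poly RP" ..
  then have "coeff LP (n - k) = coeff RP (n - k)"
    by (simp add: poly_eq_poly_eq_iff)
  moreover have "coeff LP (n - k) = restrict_minor_sum n k i X"
  proof -
    have "coeff LP (n - k) = (\<Sum>S | S \<subseteq> {0..<n} \<and> i \<in> S. if card S = k then principal_minor X S else 0)"
      unfolding LP_def coeff_sum coeff_monom
    proof (intro sum.cong refl)
      fix S assume "S \<in> {S. S \<subseteq> {0..<n} \<and> i \<in> S}"
      then have "card S \<le> n" using card_mono[of "{0..<n}" S] by auto
      then show "(if n - card S = n - k then principal_minor X S else 0) =
                 (if card S = k then principal_minor X S else 0)"
        using k by auto
    qed
    also have "\<dots> = restrict_minor_sum n k i X"
      unfolding restrict_minor_sum_def by (subst sum.inter_filter[symmetric]) (auto intro!: sum.cong)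
    finally show ?thesis .
  qed
  moreover have "coeff RP (n - k) =
      (\<Sum>j<n. Q i j * Q i j * lam j * coeff (linear_factors lam ({..<n} - {j})) (n - k))"
    unfolding RP_def coeff_sum coeff_smult by simp
  ultimately show ?thesis by simp
qed


section \<open>Straight-line programs over symbolic registers\<close>

text \<open>Programs are first written as lists of definitions \<open>k := e\<close> over symbolic register names
  (keys); \<open>compile\<close> replaces every key by the position of its first definition.\<close>

datatype 'k op = Cst real | Plus 'k 'k | Minus 'k 'k | Times 'k 'k

fun eval_op :: "('k \<Rightarrow> real) \<Rightarrow> 'k op \<Rightarrow> real" where
  "eval_op V (Cst c) = c"
| "eval_op V (Plus a b) = V a + V b"
| "eval_op V (Minus a b) = V a - V b"
| "eval_op V (Times a b) = V a * V b"

fun instr_of_op :: "nat op \<Rightarrow> instr" where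
  "instr_of_op (Cst c) = Const c"
| "instr_of_op (Plus a b) = Add a b"
| "instr_of_op (Minus a b) = Sub a b"
| "instr_of_op (Times a b) = Mul a b"

definition key_pos :: "'k list \<Rightarrow> 'k \<Rightarrow> nat" where
  "key_pos ks k = length (takeWhile (\<lambda>k'. k' \<noteq> k) ks)"

fun compile :: "'k list \<Rightarrow> ('k \<times> 'k op) list \<Rightarrow> instr list" where
  "compile ks [] = []"
| "compile ks ((k, e) # P) = instr_of_op (map_op (key_pos ks) e) # compile (ks @ [k]) P"

fun uses_defined :: "'k set \<Rightarrow> ('k \<times> 'k op) list \<Rightarrow> bool" where
  "uses_defined K [] \<longleftrightarrow> True"
| "uses_defined K ((k, e) # P) \<longleftrightarrow> set_op e \<subseteq> K \<and> uses_defined (insert k K) P"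

definition stores :: "('k \<Rightarrow> real) \<Rightarrow> 'k list \<Rightarrow> real list \<Rightarrow> bool" where
  "stores V ks rs \<longleftrightarrow> length rs = length ks \<and> (\<forall>r<length ks. rs ! r = V (ks ! r))"

lemma key_pos_less: "k \<in> set ks \<Longrightarrow> key_pos ks k < length ks"
  unfolding key_pos_def by (induction ks) auto

lemma nth_key_pos: "k \<in> set ks \<Longrightarrow> ks ! key_pos ks k = k"
  unfolding key_pos_def by (induction ks) auto

lemma reg_key_pos:
  assumes "stores V ks rs" "k \<in> set ks"
  shows "reg rs (key_pos ks k) = V k"
  using assms key_pos_less[OF assms(2)] nth_key_pos[OF assms(2)]
  by (simp add: stores_def reg_def)

lemma step_instr_of_op:
  assumes "stores V ks rs" "set_op e \<subseteq> set ks"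
  shows "step rs (instr_of_op (map_op (key_pos ks) e)) = eval_op V e"
  using assms by (cases e) (simp_all add: reg_key_pos)

lemma stores_snoc:
  "stores V ks rs \<Longrightarrow> stores V (ks @ [k]) (rs @ [V k])"
  by (auto simp: stores_def nth_append)

lemma exec_compile:
  assumes "stores V ks rs" "uses_defined (set ks) P" "\<forall>(k, e) \<in> set P. V k = eval_op V e"
  shows "stores V (ks @ map fst P) (exec rs (compile ks P))"
  using assms
proof (induction P arbitrary: ks rs)
  case Nil
  then show ?case by simp
next
  case (Cons ke P)
  obtain k e where ke: "ke = (k, e)" by fastforce
  have "step rs (instr_of_op (map_op (key_pos ks) e)) = V k"
    using Cons.prems ke step_instr_of_op by fastforce
  then have "stores V (ks @ [k]) (rs @ [step rs (instr_of_op (map_op (key_pos ks) e))])"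
    using Cons.prems(1) by (simp add: stores_snoc)
  then show ?case
    using Cons.IH[of "ks @ [k]"] Cons.prems(2,3) ke by simp
qed

lemma length_compile: "length (compile ks P) = length P"
  by (induction ks P rule: compile.induct) simp_all

lemma uses_defined_mono: "uses_defined K P \<Longrightarrow> K \<subseteq> K' \<Longrightarrow> uses_defined K' P"
  by (induction K P arbitrary: K' rule: uses_defined.induct) auto

lemma uses_defined_append:
  "uses_defined K (P @ P') \<longleftrightarrow> uses_defined K P \<and> uses_defined (K \<union> fst ` set P) P'"
  by (induction K P rule: uses_defined.induct) simp_all

lemma uses_defined_concat:
  "(\<And>x. x \<in> set xs \<Longrightarrow> uses_defined K (B x)) \<Longrightarrow> uses_defined K (concat (map B xs))"
  by (induction xs) (auto simp: uses_defined_append intro: uses_defined_mono)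

lemma uses_defined_consts:
  "\<forall>(k, e) \<in> set P. set_op e = {} \<Longrightarrow> uses_defined K P"
  by (induction K P rule: uses_defined.induct) auto

lemma uses_defined_concat_upt:
  assumes "\<And>l. l < m \<Longrightarrow> uses_defined (K \<union> fst ` set (concat (map B [0..<l]))) (B l)"
  shows "uses_defined K (concat (map B [0..<m]))"
  using assms by (induction m) (simp_all add: uses_defined_append)

lemma uses_defined_chain:
  assumes "\<And>s. c (Suc s) \<in> fst ` set (B s)" "\<And>s. s < m \<Longrightarrow> uses_defined (insert (c s) K) (B s)"
  shows "uses_defined K ((c 0, Cst z) # concat (map B [0..<m]))"
proof -
  have "uses_defined (insert (c 0) K) (concat (map B [0..<m]))"
  proof (rule uses_defined_concat_upt)
    fix s assume "s < m"
    have "c s \<in> insert (c 0) K \<union> fst ` set (concat (map B [0..<s]))"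
      using assms(1) by (cases s) auto
    then show "uses_defined (insert (c 0) K \<union> fst ` set (concat (map B [0..<s]))) (B s)"
      by (intro uses_defined_mono[OF assms(2)[OF \<open>s < m\<close>]]) auto
  qed
  then show ?thesis by simp
qed

section \<open>A quadratic-size program for the minor vector\<close>

datatype key =
  In nat | Coef nat nat | LamCoef nat nat | Quot nat nat | LamQuot nat nat | Weight nat
  | Sq nat nat | Term nat nat | Partial nat nat

definition lam_key :: "nat \<Rightarrow> nat \<Rightarrow> key" where "lam_key n l = In (2 * n * n + l)"
definition q_key :: "nat \<Rightarrow> nat \<Rightarrow> nat \<Rightarrow> key" where "q_key n i j = In (n * n + i * n + j)"

definition coef_row :: "nat \<Rightarrow> nat \<Rightarrow> (key \<times> key op) list" where
  "coef_row n l =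
     (Coef (Suc l) 0, Times (lam_key n l) (Coef l 0)) #
     concat [[(LamCoef l m, Times (lam_key n l) (Coef l m)),
              (Coef (Suc l) m, Plus (LamCoef l m) (Coef l (m - 1)))]. m \<leftarrow> [1..<Suc n]]"

definition coef_init :: "nat \<Rightarrow> (key \<times> key op) list" where
  "coef_init n = [(Coef 0 m, Cst (if m = 0 then 1 else 0)). m \<leftarrow> [0..<Suc n]]"

definition coef_prog :: "nat \<Rightarrow> (key \<times> key op) list" where
  "coef_prog n = coef_init n @ concat (map (coef_row n) [0..<n])"

text \<open>Synthetic division of \<open>linear_factors lam {..<n}\<close> by \<open>t + lam j\<close>,
  from the top coefficient down.\<close>
definition quot_step :: "nat \<Rightarrow> nat \<Rightarrow> nat \<Rightarrow> (key \<times> key op) list" where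
  "quot_step n j s =
     [(LamQuot j s, Times (lam_key n j) (Quot j s)),
      (Quot j (Suc s), Minus (Coef n (n - s)) (LamQuot j s))]"

definition quot_prog :: "nat \<Rightarrow> nat \<Rightarrow> (key \<times> key op) list" where
  "quot_prog n k = concat [(Quot j 0, Cst 0) # concat (map (quot_step n j) [0..<k]). j \<leftarrow> [0..<n]]"

definition weight_prog :: "nat \<Rightarrow> nat \<Rightarrow> (key \<times> key op) list" where
  "weight_prog n k = [(Weight j, Times (lam_key n j) (Quot j k)). j \<leftarrow> [0..<n]]"

definition sum_step :: "nat \<Rightarrow> nat \<Rightarrow> nat \<Rightarrow> (key \<times> key op) list" where
  "sum_step n i j =
     [(Sq i j, Times (q_key n i j) (q_key n i j)),
      (Term i j, Times (Sq i j) (Weight j)),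
      (Partial i (Suc j), Plus (Partial i j) (Term i j))]"

definition sum_prog :: "nat \<Rightarrow> (key \<times> key op) list" where
  "sum_prog n = concat [(Partial i 0, Cst 0) # concat (map (sum_step n i) [0..<n]). i \<leftarrow> [0..<n]]"

definition minor_prog :: "nat \<Rightarrow> nat \<Rightarrow> (key \<times> key op) list" where
  "minor_prog n k = coef_prog n @ quot_prog n k @ weight_prog n k @ sum_prog n"

lemma length_minor_prog: "length (minor_prog n k) = 5 * n * n + 2 * n * k + 5 * n + 1"
  by (simp add: minor_prog_def coef_prog_def coef_init_def coef_row_def quot_prog_def quot_step_def
      weight_prog_def sum_prog_def sum_step_def
      length_concat sum_list_triv o_def algebra_simps del: upt_Suc)


definition weight :: "nat \<Rightarrow> nat \<Rightarrow> (nat \<Rightarrow> real) \<Rightarrow> nat \<Rightarrow> real" where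
  "weight n k lam j = lam j * coeff (linear_factors lam ({..<n} - {j})) (n - k)"

fun key_value :: "nat \<Rightarrow> nat \<Rightarrow> real list \<Rightarrow> key \<Rightarrow> real" where
  "key_value n k x (In r) = x ! r"
| "key_value n k x (Coef l m) = coeff (linear_factors (inL n x) {..<l}) m"
| "key_value n k x (LamCoef l m) = inL n x l * coeff (linear_factors (inL n x) {..<l}) m"
| "key_value n k x (Quot j s) = coeff (linear_factors (inL n x) ({..<n} - {j})) (n - s)"
| "key_value n k x (LamQuot j s) = inL n x j * coeff (linear_factors (inL n x) ({..<n} - {j})) (n - s)"
| "key_value n k x (Weight j) = weight n k (inL n x) j"
| "key_value n k x (Sq i j) = inQ n x i j * inQ n x i j"
| "key_value n k x (Term i j) = inQ n x i j * inQ n x i j * weight n k (inL n x) j"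
| "key_value n k x (Partial i j) = (\<Sum>j'<j. inQ n x i j' * inQ n x i j' * weight n k (inL n x) j')"

lemma key_value_lam_key [simp]: "key_value n k x (lam_key n l) = inL n x l"
  by (simp add: lam_key_def inL_def)

lemma key_value_q_key [simp]: "key_value n k x (q_key n i j) = inQ n x i j"
  by (simp add: q_key_def inQ_def)

lemma minor_prog_consistent:
  assumes "k \<le> n"
  shows "\<forall>(k', e) \<in> set (minor_prog n k). key_value n k x k' = eval_op (key_value n k x) e"
proof -
  have "\<forall>(k', e) \<in> set (coef_prog n). key_value n k x k' = eval_op (key_value n k x) e"
    by (auto simp: coef_prog_def coef_init_def coef_row_def linear_factors_lessThan_Suc coeff_pCons'
        linear_factors_def)
  moreover have "\<forall>(k', e) \<in> set (quot_prog n k). key_value n k x k' = eval_op (key_value n k x) e"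
    using assms by (auto simp: quot_prog_def quot_step_def coeff_linear_factors_deflate
        coeff_linear_factors_deflate_top)
  moreover have "\<forall>(k', e) \<in> set (weight_prog n k). key_value n k x k' = eval_op (key_value n k x) e"
    by (auto simp: weight_prog_def weight_def)
  moreover have "\<forall>(k', e) \<in> set (sum_prog n). key_value n k x k' = eval_op (key_value n k x) e"
    by (auto simp: sum_prog_def sum_step_def)
  ultimately show ?thesis
    by (auto simp: minor_prog_def)
qed

lemma lam_key_mem: "l < n \<Longrightarrow> lam_key n l \<in> In ` {..<2 * n * n + n}"
  by (simp add: lam_key_def)

lemma Coef_mem_coef_prefix:
  assumes "l \<le> n" "m \<le> n"
  shows "Coef l m \<in> fst ` set (coef_init n) \<union> fst ` set (concat (map (coef_row n) [0..<l]))"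
proof (cases l)
  case 0
  then show ?thesis using assms by (auto simp: coef_init_def image_iff simp del: upt_Suc)
next
  case (Suc l')
  have "Coef l m \<in> fst ` set (coef_row n l')"
    using assms Suc by (cases m) (auto simp: coef_row_def image_iff simp del: upt_Suc)
  then show ?thesis using Suc by auto
qed

lemma uses_defined_coef_prog: "uses_defined (In ` {..<2 * n * n + n}) (coef_prog n)"
  unfolding coef_prog_def uses_defined_append
proof (intro conjI)
  show "uses_defined (In ` {..<2 * n * n + n}) (coef_init n)"
    by (rule uses_defined_consts) (auto simp: coef_init_def)
next
  show "uses_defined (In ` {..<2 * n * n + n} \<union> fst ` set (coef_init n))
      (concat (map (coef_row n) [0..<n]))"
  proof (rule uses_defined_concat_upt)
    fix l assume l: "l < n"
    define K where "K = In ` {..<2 * n * n + n} \<union>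
      fst ` set (coef_init n) \<union>
      fst ` set (concat (map (coef_row n) [0..<l]))"
    have "lam_key n l \<in> K" "\<And>m. m \<le> n \<Longrightarrow> Coef l m \<in> K"
      using lam_key_mem[OF l] Coef_mem_coef_prefix[of l n] l unfolding K_def by auto
    then show "uses_defined K (coef_row n l)"
      unfolding coef_row_def by (auto intro!: uses_defined_concat simp del: upt_Suc)
  qed
qed


lemma Coef_mem_coef_prog: "l \<le> n \<Longrightarrow> m \<le> n \<Longrightarrow> Coef l m \<in> fst ` set (coef_prog n)"
  using Coef_mem_coef_prefix[of l n m] by (auto simp: coef_prog_def)

lemma uses_defined_quot_prog:
  "uses_defined (In ` {..<2 * n * n + n} \<union> fst ` set (coef_prog n)) (quot_prog n k)"
  unfolding quot_prog_def
proof (intro uses_defined_concat uses_defined_chain)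
  fix j s assume "j \<in> set [0..<n]"
  then show "uses_defined (insert (Quot j s) (In ` {..<2 * n * n + n} \<union> fst ` set (coef_prog n))) (quot_step n j s)"
    using lam_key_mem[of j n] Coef_mem_coef_prog[of n n "n - s"] by (auto simp: quot_step_def)
qed (simp add: quot_step_def)

lemma Quot_mem_quot_prog: "j < n \<Longrightarrow> s \<le> k \<Longrightarrow> Quot j s \<in> fst ` set (quot_prog n k)"
  by (cases s) (force simp: quot_prog_def quot_step_def)+

lemma uses_defined_weight_prog:
  "uses_defined (In ` {..<2 * n * n + n} \<union> fst ` set (quot_prog n k)) (weight_prog n k)"
  unfolding weight_prog_def
  by (rule uses_defined_concat[where B = "\<lambda>j. [(Weight j, Times (lam_key n j) (Quot j k))]", simplified])
    (auto simp: lam_key_mem Quot_mem_quot_prog)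


lemma q_key_mem:
  assumes "i < n" "j < n"
  shows "q_key n i j \<in> In ` {..<2 * n * n + n}"
proof -
  have "i * n + j < Suc i * n" using assms(2) by simp
  also have "\<dots> \<le> n * n" using assms(1) by (intro mult_le_mono1) simp
  finally show ?thesis by (simp add: q_key_def)
qed

lemma Weight_mem_weight_prog: "j < n \<Longrightarrow> Weight j \<in> fst ` set (weight_prog n k)"
  by (force simp: weight_prog_def)

lemma uses_defined_sum_prog:
  "uses_defined (In ` {..<2 * n * n + n} \<union> fst ` set (weight_prog n k)) (sum_prog n)"
  unfolding sum_prog_def
proof (intro uses_defined_concat uses_defined_chain)
  fix i j assume "i \<in> set [0..<n]" "j < n"
  then show "uses_defined (insert (Partial i j) (In ` {..<2 * n * n + n} \<union> fst ` set (weight_prog n k))) (sum_step n i j)"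
    using q_key_mem[of i n j] Weight_mem_weight_prog[of j n k] by (auto simp: sum_step_def)
qed (simp add: sum_step_def)

lemma uses_defined_minor_prog: "uses_defined (In ` {..<2 * n * n + n}) (minor_prog n k)"
  unfolding minor_prog_def uses_defined_append
proof (intro conjI uses_defined_coef_prog)
  show "uses_defined (In ` {..<2 * n * n + n} \<union> fst ` set (coef_prog n)) (quot_prog n k)"
    by (rule uses_defined_quot_prog)
  show "uses_defined (In ` {..<2 * n * n + n} \<union> fst ` set (coef_prog n) \<union> fst ` set (quot_prog n k))
      (weight_prog n k)"
    by (rule uses_defined_mono[OF uses_defined_weight_prog]) blast
  show "uses_defined (In ` {..<2 * n * n + n} \<union> fst ` set (coef_prog n) \<union> fst ` set (quot_prog n k)
      \<union> fst ` set (weight_prog n k)) (sum_prog n)"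
    by (rule uses_defined_mono[OF uses_defined_sum_prog]) blast
qed

lemma Partial_mem_minor_prog:
  assumes "i < n"
  shows "Partial i n \<in> fst ` set (minor_prog n k)"
proof -
  obtain n' where n: "n = Suc n'" using assms by (cases n) auto
  have "set (sum_step n i n') \<subseteq> set (concat (map (sum_step n i) [0..<n]))"
    using n by (auto simp del: upt_Suc)
  also have "\<dots> \<subseteq> set (sum_prog n)"
    unfolding sum_prog_def using assms by (auto simp del: upt_Suc)
  also have "\<dots> \<subseteq> set (minor_prog n k)"
    unfolding minor_prog_def by auto
  finally show ?thesis
    using n by (force simp: sum_step_def)
qed


definition minor_slp :: "nat \<Rightarrow> nat \<Rightarrow> instr list" where
  "minor_slp n k = compile (map In [0..<2 * n * n + n]) (minor_prog n k)"

definition minor_outs :: "nat \<Rightarrow> nat \<Rightarrow> nat list" where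
  "minor_outs n k =
     map (\<lambda>i. key_pos (map In [0..<2 * n * n + n] @ map fst (minor_prog n k)) (Partial i n)) [0..<n]"

lemma length_minor_slp:
  assumes "1 \<le> n" "k \<le> n"
  shows "length (minor_slp n k) \<le> 13 * (n * n)"
proof -
  have "1 \<le> n * n" "n \<le> n * n" "n * k \<le> n * n"
    using assms by (simp_all add: le_square)
  then show ?thesis
    unfolding minor_slp_def length_compile length_minor_prog by linarith
qed

lemma slp_computes_minor_vector:
  assumes "k \<le> n"
  shows "slp_computes (2 * n * n + n) (valid_input n) (minor_vector n k) (minor_slp n k) (minor_outs n k)"
  unfolding slp_computes_def
proof (intro allI impI)
  fix x :: "real list"
  assume len: "length x = 2 * n * n + n" and valid: "valid_input n x"
  let ?ks = "map In [0..<2 * n * n + n]"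
  let ?V = "key_value n k x"
  have "stores ?V ?ks x"
    using len by (simp add: stores_def)
  moreover have "uses_defined (set ?ks) (minor_prog n k)"
    using uses_defined_minor_prog by (simp add: atLeast0LessThan)
  ultimately have regs: "stores ?V (?ks @ map fst (minor_prog n k)) (exec x (minor_slp n k))"
    unfolding minor_slp_def using minor_prog_consistent[OF assms] by (rule exec_compile)
  have "reg (exec x (minor_slp n k)) (key_pos (?ks @ map fst (minor_prog n k)) (Partial i n)) =
      restrict_minor_sum n k i (inX n x)" if "i < n" for i
  proof -
    have "reg (exec x (minor_slp n k)) (key_pos (?ks @ map fst (minor_prog n k)) (Partial i n)) =
        (\<Sum>j<n. inQ n x i j * inQ n x i j * weight n k (inL n x) j)"
      using reg_key_pos[OF regs] Partial_mem_minor_prog[OF that] by simp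
    also have "\<dots> = restrict_minor_sum n k i (inX n x)"
      using restrict_minor_sum_spectral[where Q = "inQ n x" and X = "inX n x" and lam = "inL n x"]
        valid that assms
      unfolding valid_input_def weight_def by (simp add: mult.assoc)
    finally show ?thesis .
  qed
  then show "map (reg (exec x (minor_slp n k))) (minor_outs n k) = minor_vector n k x"
    by (simp add: minor_outs_def minor_vector_def)
qed

section \<open>Matrix multiplication needs quadratically many operations\<close>

lemma length_exec: "length (exec rs P) = length rs + length P"
  by (induction P arbitrary: rs) auto

lemma nth_exec_prefix: "a < length rs \<Longrightarrow> exec rs P ! a = rs ! a"
  by (induction P arbitrary: rs) (auto simp: nth_append)

text \<open>An output whose value is neither \<open>0\<close> nor an input must be read from a register written by
  the program, so pairwise distinct such outputs need pairwise distinct instructions.\<close>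
lemma length_outputs_le_length_prog:
  assumes distinct: "distinct (map (reg (exec x P)) os)"
    and fresh: "\<forall>r\<in>set os. reg (exec x P) r \<notin> insert 0 (set x)"
  shows "length os \<le> length P"
proof -
  have "set os \<subseteq> {length x..<length x + length P}"
  proof
    fix r assume r: "r \<in> set os"
    have "r < length x + length P"
      using fresh r by (fastforce simp: reg_def length_exec)
    moreover have "\<not> r < length x"
      using fresh r by (auto simp: reg_def length_exec nth_exec_prefix)
    ultimately show "r \<in> {length x..<length x + length P}" by simp
  qed
  then have "card (set os) \<le> length P"
    using card_mono[of "{length x..<length x + length P}"] by fastforce
  moreover have "distinct os" using distinct by (simp add: distinct_map)
  ultimately show ?thesis by (simp add: distinct_card)
qed

text \<open>Witness: \<open>A\<close> has the distinct entries \<open>r + 2\<close> and \<open>B = c I\<close> with \<open>c\<close> above all of them, so the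
  \<open>n\<^sup>2\<close> products \<open>(r + 2) c\<close> are distinct and exceed every input.\<close>
lemma matmul_prog_length_ge:
  assumes "slp_computes (2 * n * n) (\<lambda>_. True) (matmul_spec n) P os"
  shows "n * n \<le> length P"
proof -
  define c where "c = real (n * n + 2)"
  define x where "x = map (\<lambda>r. real r + 2) [0..<n * n] @ map (\<lambda>r. if r div n = r mod n then c else 0) [0..<n * n]"
  have x_le_c: "y \<le> c" if "y \<in> set x" for y
    using that by (auto simp: x_def c_def simp flip: of_nat_mult)
  have "matmul_spec n x ! r = (real r + 2) * c" if r: "r < n * n" for r
  proof -
    have n: "0 < n" using r by (cases n) auto
    have rdiv: "r div n < n" using r by (simp add: less_mult_imp_div_less)
    have B: "x ! (n * n + l * n + r mod n) = (if l = r mod n then c else 0)" if "l < n" for l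
    proof -
      have "l * n + r mod n < Suc l * n" using n by simp
      also have "\<dots> \<le> n * n" using that by (intro mult_le_mono1) simp
      finally show ?thesis using n by (simp add: x_def nth_append)
    qed
    have "matmul_spec n x ! r = (\<Sum>l<n. x ! (r div n * n + l) * x ! (n * n + l * n + r mod n))"
      using r by (simp add: matmul_spec_def)
    also have "\<dots> = x ! (r div n * n + r mod n) * c"
      using n by (simp add: B sum.delta' if_distrib[of "\<lambda>y. _ * y"] cong: if_cong)
    also have "r div n * n + r mod n = r" by simp
    finally show ?thesis using r by (simp add: x_def nth_append)
  qed
  then have spec: "matmul_spec n x = map (\<lambda>r. (real r + 2) * c) [0..<n * n]"
    by (intro nth_equalityI) (auto simp: matmul_spec_def)
  have outs: "map (reg (exec x P)) os = map (\<lambda>r. (real r + 2) * c) [0..<n * n]"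
    using assms spec by (simp add: slp_computes_def x_def)
  have "c > 0" unfolding c_def by (rule of_nat_0_less_iff[THEN iffD2]) simp
  have "length os \<le> length P"
  proof (rule length_outputs_le_length_prog)
    show "distinct (map (reg (exec x P)) os)"
      unfolding outs using \<open>c > 0\<close> by (simp add: distinct_map inj_on_def)
    show "\<forall>r\<in>set os. reg (exec x P) r \<notin> insert 0 (set x)"
    proof
      fix r assume "r \<in> set os"
      then have "reg (exec x P) r \<in> set (map (\<lambda>r. (real r + 2) * c) [0..<n * n])"
        unfolding outs[symmetric] by simp
      then have "reg (exec x P) r > c" using \<open>c > 0\<close> by auto
      then show "reg (exec x P) r \<notin> insert 0 (set x)" using x_le_c \<open>c > 0\<close> by fastforce
    qed
  qed
  then show ?thesis using arg_cong[OF outs, of length] by simp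
qed


lemma mm_exponent_quadratic_lower_bound:
  assumes "mm_exponent \<tau>"
  obtains C where "\<And>n. 1 \<le> n \<Longrightarrow> real (n * n) \<le> C * real n powr \<tau>"
proof -
  obtain C where C: "\<forall>n\<ge>1. \<exists>P outs. slp_computes (2 * n * n) (\<lambda>_. True) (matmul_spec n) P outs \<and>
      real (length P) \<le> C * real n powr \<tau>"
    using assms unfolding mm_exponent_def by blast
  have "real (n * n) \<le> C * real n powr \<tau>" if n: "1 \<le> n" for n
  proof -
    obtain P outs where "slp_computes (2 * n * n) (\<lambda>_. True) (matmul_spec n) P outs"
      and "real (length P) \<le> C * real n powr \<tau>"
      using C n by blast
    then show ?thesis using matmul_prog_length_ge[of n P outs] by linarith
  qed
  then show ?thesis using that by blast
qed

theorem mainTheorem11: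
  fixes \<tau> :: real
  assumes "mm_exponent \<tau>"
  shows "\<exists>C. \<forall>n k. 1 \<le> k \<and> k \<le> n \<longrightarrow>
           (\<exists>P outs. slp_computes (2 * n * n + n) (valid_input n) (minor_vector n k) P outs \<and>
                     real (length P) \<le> C * real n powr \<tau>)"
proof -
  obtain C where C: "\<And>n. 1 \<le> n \<Longrightarrow> real (n * n) \<le> C * real n powr \<tau>"
    using mm_exponent_quadratic_lower_bound[OF assms] by blast
  have "real (length (minor_slp n k)) \<le> 13 * C * real n powr \<tau>" if "1 \<le> k" "k \<le> n" for n k
  proof -
    have "real (length (minor_slp n k)) \<le> 13 * real (n * n)"
      using length_minor_slp[of n k] that by linarith
    also have "\<dots> \<le> 13 * C * real n powr \<tau>"
      using C[of n] that by simp
    finally show ?thesis .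
  qed
  then show ?thesis
    using slp_computes_minor_vector by blast
qed

end
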